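(* Let a finitely generated group $\Gamma$ act freely and properly on a locally compact space $X$. Then the Hurder compactification $\tilde X$ is a $\Gamma$-equivariant compactification of $X$ (the action extends continuously) on whose corona $\partial_\Gamma X$ the group $\Gamma$ acts trivially, and it is the maximal such compactification: for every compactification $\bar X$ of $X$ to which the $\Gamma$-action extends continuously and such that every point of $\bar X\setminus X$ is fixed by $\Gamma$, the identity of $X$ extends to a continuous map $\tilde X\to\bar X$.
   Context: Fix a finite symmetric generating set $S$ of $\Gamma$ with word length $\|\cdot\|_S$. For a continuous $f:X\to\mathbb{R}$ and $R>0$, $\Gamma\text{-}var_R(f)(x)=\max\{|f(x)-f(\gamma x)|:\|\gamma\|_S\le R\}$. The Hurder compactification $\tilde X$ is the compactification of $X$ determined by the algebra of bounded continuous functions $f$ on $X$ such that for every $R>0$, $\Gamma\text{-}var_R(f)(x)\to 0$ as $x\to\infty$; its corona is $\partial_\Gamma X=\tilde X\setminus X$. *)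

theory Defs
  imports "HOL-Analysis.Analysis" "HOL-Algebra.Generated_Groups"
begin

definition word_length :: "('g, 'm) monoid_scheme \<Rightarrow> 'g set \<Rightarrow> 'g \<Rightarrow> nat" where
  "word_length G S g =
     (LEAST n. \<exists>ws. length ws = n \<and> set ws \<subseteq> S \<and> foldr (\<otimes>\<^bsub>G\<^esub>) ws \<one>\<^bsub>G\<^esub> = g)"

definition continuous_group_action ::
  "('g, 'm) monoid_scheme \<Rightarrow> 'a topology \<Rightarrow> ('g \<Rightarrow> 'a \<Rightarrow> 'a) \<Rightarrow> bool" where
  "continuous_group_action G X act \<longleftrightarrow>
     (\<forall>g\<in>carrier G. continuous_map X X (act g)) \<and>
     (\<forall>x\<in>topspace X. act \<one>\<^bsub>G\<^esub> x = x) \<and>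
     (\<forall>g\<in>carrier G. \<forall>h\<in>carrier G. \<forall>x\<in>topspace X.
         act (g \<otimes>\<^bsub>G\<^esub> h) x = act g (act h x))"

definition free_action :: "('g, 'm) monoid_scheme \<Rightarrow> 'a topology \<Rightarrow> ('g \<Rightarrow> 'a \<Rightarrow> 'a) \<Rightarrow> bool" where
  "free_action G X act \<longleftrightarrow>
     (\<forall>g\<in>carrier G. \<forall>x\<in>topspace X. act g x = x \<longrightarrow> g = \<one>\<^bsub>G\<^esub>)"

definition proper_action :: "('g, 'm) monoid_scheme \<Rightarrow> 'a topology \<Rightarrow> ('g \<Rightarrow> 'a \<Rightarrow> 'a) \<Rightarrow> bool" where
  "proper_action G X act \<longleftrightarrow>
     (\<forall>K. compactin X K \<longrightarrow> finite {g \<in> carrier G. act g ` K \<inter> K \<noteq> {}})"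

definition gamma_var ::
  "('g, 'm) monoid_scheme \<Rightarrow> 'g set \<Rightarrow> ('g \<Rightarrow> 'a \<Rightarrow> 'a) \<Rightarrow> real \<Rightarrow> ('a \<Rightarrow> real) \<Rightarrow> 'a \<Rightarrow> real" where
  "gamma_var G S act R f x =
     Max {\<bar>f x - f (act g x)\<bar> | g. g \<in> carrier G \<and> real (word_length G S g) \<le> R}"

definition hurder_algebra ::
  "('g, 'm) monoid_scheme \<Rightarrow> 'g set \<Rightarrow> 'a topology \<Rightarrow> ('g \<Rightarrow> 'a \<Rightarrow> 'a) \<Rightarrow> ('a \<Rightarrow> real) set" where
  "hurder_algebra G S X act =
     {f. continuous_map X euclideanreal f \<and>
         (\<exists>B. \<forall>x\<in>topspace X. \<bar>f x\<bar> \<le> B) \<and>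
         (\<forall>R>0. \<forall>e>0. \<exists>K. compactin X K \<and>
             (\<forall>x\<in>topspace X - K. gamma_var G S act R f x < e))}"

definition compactification :: "'a topology \<Rightarrow> 'b topology \<Rightarrow> ('a \<Rightarrow> 'b) \<Rightarrow> bool" where
  "compactification X Y j \<longleftrightarrow>
     compact_space Y \<and> Hausdorff_space Y \<and> embedding_map X Y j \<and>
     Y closure_of (j ` topspace X) = topspace Y"

definition compactification_determined_by ::
  "('a \<Rightarrow> real) set \<Rightarrow> 'a topology \<Rightarrow> 'b topology \<Rightarrow> ('a \<Rightarrow> 'b) \<Rightarrow> bool" where
  "compactification_determined_by A X Y j \<longleftrightarrow>
     compactification X Y j \<and>
     (\<forall>f. f \<in> A \<longleftrightarrow>
          (\<exists>h. continuous_map Y euclideanreal h \<and> (\<forall>x\<in>topspace X. f x = h (j x))))"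

definition hurder_compactification ::
  "('g, 'm) monoid_scheme \<Rightarrow> 'g set \<Rightarrow> 'a topology \<Rightarrow> ('g \<Rightarrow> 'a \<Rightarrow> 'a) \<Rightarrow> 'b topology \<Rightarrow> ('a \<Rightarrow> 'b) \<Rightarrow> bool" where
  "hurder_compactification G S X act Y j \<longleftrightarrow>
     compactification_determined_by (hurder_algebra G S X act) X Y j"

definition extends_action ::
  "('g, 'm) monoid_scheme \<Rightarrow> 'a topology \<Rightarrow> ('g \<Rightarrow> 'a \<Rightarrow> 'a) \<Rightarrow> 'b topology \<Rightarrow> ('a \<Rightarrow> 'b) \<Rightarrow> ('g \<Rightarrow> 'b \<Rightarrow> 'b) \<Rightarrow> bool" where
  "extends_action G X act Y j actY \<longleftrightarrow>
     continuous_group_action G Y actY \<and>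
     (\<forall>g\<in>carrier G. \<forall>x\<in>topspace X. actY g (j x) = j (act g x))"

definition trivial_on_corona ::
  "('g, 'm) monoid_scheme \<Rightarrow> 'a topology \<Rightarrow> 'b topology \<Rightarrow> ('a \<Rightarrow> 'b) \<Rightarrow> ('g \<Rightarrow> 'b \<Rightarrow> 'b) \<Rightarrow> bool" where
  "trivial_on_corona G X Y j actY \<longleftrightarrow>
     (\<forall>g\<in>carrier G. \<forall>y\<in>topspace Y - j ` topspace X. actY g y = y)"

end

theory Submission
  imports Defs
begin

(* A continuous map from X into a compact Hausdorff space Z extends over a compactification Y
   of X as soon as every continuous real function on Z, pulled back to X, extends over Y.  For the
   Hurder compactification both claims thus become statements about the Hurder algebra.
   Translation by g preserves the algebra, since conjugation by g changes word length by at most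
   a constant; so the action extends.  If Z is equivariant with trivial action on its corona, the
   set where some element of the R-ball displaces a continuous function on Z by at least e is
   closed in Z and misses the corona, hence is a compact subset of X; so these functions lie in
   the Hurder algebra, which yields the map Y -> Z.  Conversely, an element moving a corona point
   of Y would displace a separating function by about 1 arbitrarily far out in X. *)

lemma embedding_map_imp_continuous_map: "embedding_map X Y f \<Longrightarrow> continuous_map X Y f"
  unfolding embedding_map_def
  using homeomorphic_imp_continuous_map continuous_map_in_subtopology by blast

lemma compactification_imp_continuous_map: "compactification X Y j \<Longrightarrow> continuous_map X Y j"
  unfolding compactification_def by (blast intro: embedding_map_imp_continuous_map)

lemma compact_space_imp_bounded_real_function:
  assumes "compact_space Z" "continuous_map Z euclideanreal \<phi>"
  obtains B where "\<forall>z\<in>topspace Z. \<bar>\<phi> z\<bar> \<le> B"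
proof -
  have "compact (\<phi> ` topspace Z)"
    using image_compactin[of Z "topspace Z" euclideanreal \<phi>] assms
    unfolding compact_space_def by simp
  then have "bounded (\<phi> ` topspace Z)"
    by (rule compact_imp_bounded)
  then show ?thesis
    using that unfolding bounded_real by auto
qed

lemma compactification_compactin_preimage:
  assumes "compactification X Z k" "closedin Z C" "C \<subseteq> k ` topspace X"
  shows "compactin X {x \<in> topspace X. k x \<in> C}"
proof -
  have "compactin Z C"
    using assms(1,2) closedin_compact_space unfolding compactification_def by blast
  moreover have "k ` {x \<in> topspace X. k x \<in> C} = C"
    using assms(3) by auto
  ultimately show ?thesis
    using assms(1,3) homeomorphic_map_compactness[of X "subtopology Z (k ` topspace X)" k]
    unfolding compactification_def embedding_map_def
    by (metis (no_types, lifting) compactin_subtopology mem_Collect_eq subsetI)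
qed

lemma compact_Hausdorff_separating_function:
  assumes "compact_space Z" "Hausdorff_space Z" "a \<in> topspace Z" "b \<in> topspace Z" "a \<noteq> b"
  obtains \<phi> where "continuous_map Z euclideanreal \<phi>" "\<phi> a = 0" "\<phi> b = 1"
proof -
  have "normal_space Z"
    using assms compact_Hausdorff_or_regular_imp_normal_space by blast
  then obtain \<phi> where "continuous_map Z euclideanreal \<phi>" "\<phi> ` {a} \<subseteq> {0}" "\<phi> ` {b} \<subseteq> {1}"
    using Urysohn_lemma_alt[of Z "{a}" "{b}" 0 1] assms closedin_Hausdorff_singleton by force
  then show ?thesis using that by auto
qed

lemma continuous_map_if_closed_graph:
  assumes Z: "compact_space Z" and h: "h \<in> topspace Y \<rightarrow> topspace Z"
    and graph: "closedin (prod_topology Y Z) ((\<lambda>y. (y, h y)) ` topspace Y)"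
  shows "continuous_map Y Z h"
  unfolding continuous_map_closedin
proof (intro conjI allI impI h)
  fix C assume "closedin Z C"
  then have "closedin (prod_topology Y Z) ((\<lambda>y. (y, h y)) ` topspace Y \<inter> topspace Y \<times> C)"
    using graph by (intro closedin_Int) (auto simp: closedin_prod_Times_iff)
  moreover have "{y \<in> topspace Y. h y \<in> C} = fst ` ((\<lambda>y. (y, h y)) ` topspace Y \<inter> topspace Y \<times> C)"
    by force
  ultimately show "closedin Y {y \<in> topspace Y. h y \<in> C}"
    using closed_map_fst[OF Z] unfolding closed_map_def by metis
qed

text \<open>The candidate extension is the closure of the graph of \<open>x \<mapsto> (j x, k x)\<close>; it is
  defined everywhere because projecting along a compact factor is closed, and it is single-valued
  because the real functions on the compact Hausdorff space \<open>Z\<close> separate points.\<close>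
lemma continuous_extension_from_real_functions:
  assumes Y: "compact_space Y" and dense: "Y closure_of (j ` topspace X) = topspace Y"
    and j: "continuous_map X Y j"
    and Z: "compact_space Z" "Hausdorff_space Z" and k: "continuous_map X Z k"
    and functions_extend: "\<And>\<phi>. continuous_map Z euclideanreal \<phi> \<Longrightarrow>
       \<exists>\<psi>. continuous_map Y euclideanreal \<psi> \<and> (\<forall>x\<in>topspace X. \<psi> (j x) = \<phi> (k x))"
  shows "\<exists>h. continuous_map Y Z h \<and> (\<forall>x\<in>topspace X. h (j x) = k x)"
proof -
  define \<Gamma> where "\<Gamma> = prod_topology Y Z closure_of ((\<lambda>x. (j x, k x)) ` topspace X)"
  have closed: "closedin (prod_topology Y Z) \<Gamma>"
    unfolding \<Gamma>_def by simp
  have pairs: "(j x, k x) \<in> \<Gamma>" if "x \<in> topspace X" for x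
    unfolding \<Gamma>_def using that j k
    by (intro closure_of_subset[THEN subsetD]) (auto simp: continuous_map_def)
  have \<Gamma>_sub: "\<Gamma> \<subseteq> topspace Y \<times> topspace Z"
    unfolding \<Gamma>_def using closure_of_subset_topspace by fastforce
  have defined: "\<exists>z. (y, z) \<in> \<Gamma>" if "y \<in> topspace Y" for y
  proof -
    have "closedin Y (fst ` \<Gamma>)"
      using closed_map_fst[OF Z(1)] closed unfolding closed_map_def by blast
    moreover have "j ` topspace X \<subseteq> fst ` \<Gamma>"
      using pairs by force
    ultimately have "topspace Y \<subseteq> fst ` \<Gamma>"
      using closure_of_minimal dense by metis
    then show ?thesis using that by force
  qed
  have single_valued: "z1 = z2" if z1: "(y, z1) \<in> \<Gamma>" and z2: "(y, z2) \<in> \<Gamma>" for y z1 z2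
  proof (rule ccontr)
    assume "z1 \<noteq> z2"
    moreover have "z1 \<in> topspace Z" "z2 \<in> topspace Z"
      using z1 z2 \<Gamma>_sub by auto
    ultimately obtain \<phi> where \<phi>: "continuous_map Z euclideanreal \<phi>" "\<phi> z1 = 0" "\<phi> z2 = 1"
      using compact_Hausdorff_separating_function[OF Z] by metis
    then obtain \<psi> where \<psi>: "continuous_map Y euclideanreal \<psi>" "\<forall>x\<in>topspace X. \<psi> (j x) = \<phi> (k x)"
      using functions_extend by blast
    have agree: "(\<psi> \<circ> fst) p = (\<phi> \<circ> snd) p" if "p \<in> \<Gamma>" for p
    proof (rule forall_in_closure_of_eq[of p "prod_topology Y Z" _ euclideanreal "\<psi> \<circ> fst" "\<phi> \<circ> snd"])
      show "p \<in> prod_topology Y Z closure_of ((\<lambda>x. (j x, k x)) ` topspace X)"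
        using that unfolding \<Gamma>_def .
      show "continuous_map (prod_topology Y Z) euclideanreal (\<psi> \<circ> fst)"
        using continuous_map_fst \<psi>(1) by (rule continuous_map_compose)
      show "continuous_map (prod_topology Y Z) euclideanreal (\<phi> \<circ> snd)"
        using continuous_map_snd \<phi>(1) by (rule continuous_map_compose)
    qed (use \<psi>(2) in auto)
    from agree[OF z1] agree[OF z2] \<phi> show False by simp
  qed
  define h where "h y = (SOME z. (y, z) \<in> \<Gamma>)" for y
  have h: "(y, h y) \<in> \<Gamma>" if "y \<in> topspace Y" for y
    unfolding h_def using defined[OF that] by (rule someI_ex)
  have graph: "\<Gamma> = (\<lambda>y. (y, h y)) ` topspace Y"
  proof
    show "\<Gamma> \<subseteq> (\<lambda>y. (y, h y)) ` topspace Y"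
    proof
      fix p assume "p \<in> \<Gamma>"
      moreover obtain y z where "p = (y, z)" by fastforce
      ultimately have "y \<in> topspace Y" "z = h y"
        using \<Gamma>_sub h single_valued by blast+
      then show "p \<in> (\<lambda>y. (y, h y)) ` topspace Y"
        using \<open>p = (y, z)\<close> by blast
    qed
  qed (use h in blast)
  have "h \<in> topspace Y \<rightarrow> topspace Z"
    using h \<Gamma>_sub by blast
  then have "continuous_map Y Z h"
    using continuous_map_if_closed_graph[OF Z(1)] closed unfolding graph by blast
  moreover have "h (j x) = k x" if "x \<in> topspace X" for x
    using pairs[OF that] graph by auto
  ultimately show ?thesis by blast
qed

lemma
  assumes "continuous_group_action G X act"
  shows continuous_group_action_continuous: "g \<in> carrier G \<Longrightarrow> continuous_map X X (act g)"
    and continuous_group_action_one: "x \<in> topspace X \<Longrightarrow> act \<one>\<^bsub>G\<^esub> x = x"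
    and continuous_group_action_mult: "g \<in> carrier G \<Longrightarrow> h \<in> carrier G \<Longrightarrow> x \<in> topspace X \<Longrightarrow>
      act (g \<otimes>\<^bsub>G\<^esub> h) x = act g (act h x)"
  using assms unfolding continuous_group_action_def by blast+

lemma continuous_group_action_in_topspace:
  "continuous_group_action G X act \<Longrightarrow> g \<in> carrier G \<Longrightarrow> x \<in> topspace X \<Longrightarrow> act g x \<in> topspace X"
  using continuous_group_action_continuous[of G X act g] by (auto simp: continuous_map_def)

lemma (in group) continuous_group_action_inv_cancel:
  "continuous_group_action G X act \<Longrightarrow> g \<in> carrier G \<Longrightarrow> x \<in> topspace X \<Longrightarrow> act (inv g) (act g x) = x"
  using continuous_group_action_mult[of G X act "inv g" g x] continuous_group_action_one by fastforce

lemma (in monoid) foldr_mult_closed: "set ws \<subseteq> carrier G \<Longrightarrow> foldr (\<otimes>) ws \<one> \<in> carrier G"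
  by (induction ws) auto

lemma (in monoid) foldr_mult_append:
  "set ws \<subseteq> carrier G \<Longrightarrow> set vs \<subseteq> carrier G \<Longrightarrow>
    foldr (\<otimes>) (ws @ vs) \<one> = foldr (\<otimes>) ws \<one> \<otimes> foldr (\<otimes>) vs \<one>"
  by (induction ws) (auto simp: m_assoc foldr_mult_closed)

lemma (in group) generate_imp_word:
  assumes "S \<subseteq> carrier G" "\<forall>s\<in>S. inv s \<in> S" "g \<in> generate G S"
  shows "\<exists>ws. set ws \<subseteq> S \<and> foldr (\<otimes>) ws \<one> = g"
  using assms(3)
proof (induction rule: generate.induct)
  case one
  show ?case by (intro exI[of _ "[]"]) simp
next
  case (incl h)
  then show ?case using assms(1) by (intro exI[of _ "[h]"]) auto
next
  case (inv h)
  then show ?case using assms by (intro exI[of _ "[inv h]"]) auto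
next
  case (eng h1 h2)
  then obtain ws vs where "set ws \<subseteq> S" "foldr (\<otimes>) ws \<one> = h1" "set vs \<subseteq> S" "foldr (\<otimes>) vs \<one> = h2"
    by blast
  then show ?case
    using foldr_mult_append assms(1) by (intro exI[of _ "ws @ vs"]) auto
qed

locale word_metric = group G for G :: "('g, 'm) monoid_scheme" (structure) +
  fixes S :: "'g set"
  assumes finite_generators: "finite S"
    and generators_closed: "S \<subseteq> carrier G"
    and generators_inv_closed: "\<forall>s\<in>S. inv s \<in> S"
    and generate_generators: "generate G S = carrier G"
begin

lemma word_length_attained:
  assumes "g \<in> carrier G"
  obtains ws where "length ws = word_length G S g" "set ws \<subseteq> S" "foldr (\<otimes>) ws \<one> = g"
proof -
  have "\<exists>n ws. length ws = n \<and> set ws \<subseteq> S \<and> foldr (\<otimes>) ws \<one> = g"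
    using generate_imp_word generators_closed generators_inv_closed generate_generators assms by blast
  then have "\<exists>ws. length ws = word_length G S g \<and> set ws \<subseteq> S \<and> foldr (\<otimes>) ws \<one> = g"
    unfolding word_length_def by (rule LeastI_ex)
  then show ?thesis
    using that by blast
qed

lemma word_length_le: "set ws \<subseteq> S \<Longrightarrow> word_length G S (foldr (\<otimes>) ws \<one>) \<le> length ws"
  unfolding word_length_def by (rule Least_le) blast

lemma word_length_one: "word_length G S \<one> = 0"
  using word_length_le[of "[]"] by simp

lemma word_length_mult:
  assumes "g \<in> carrier G" "h \<in> carrier G"
  shows "word_length G S (g \<otimes> h) \<le> word_length G S g + word_length G S h"
proof -
  obtain ws where ws: "length ws = word_length G S g" "set ws \<subseteq> S" "foldr (\<otimes>) ws \<one> = g"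
    using word_length_attained assms(1) .
  obtain vs where vs: "length vs = word_length G S h" "set vs \<subseteq> S" "foldr (\<otimes>) vs \<one> = h"
    using word_length_attained assms(2) .
  have "foldr (\<otimes>) (ws @ vs) \<one> = g \<otimes> h"
    using foldr_mult_append ws vs generators_closed by auto
  then show ?thesis
    using word_length_le[of "ws @ vs"] ws vs by simp
qed

lemma word_length_conjugate:
  assumes "g \<in> carrier G" "h \<in> carrier G"
  shows "word_length G S (g \<otimes> h \<otimes> inv g) \<le> word_length G S h + (word_length G S g + word_length G S (inv g))"
  using word_length_mult[of "g \<otimes> h" "inv g"] word_length_mult[of g h] assms by simp

definition word_ball :: "real \<Rightarrow> 'g set" where
  "word_ball R = {g \<in> carrier G. real (word_length G S g) \<le> R}"

lemma finite_word_ball: "finite (word_ball R)"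
proof -
  have "word_ball R \<subseteq> (\<lambda>ws. foldr (\<otimes>) ws \<one>) ` {ws. set ws \<subseteq> S \<and> length ws \<le> nat \<lfloor>R\<rfloor>}"
  proof
    fix g assume g: "g \<in> word_ball R"
    then obtain ws where "length ws = word_length G S g" "set ws \<subseteq> S" "foldr (\<otimes>) ws \<one> = g"
      using word_length_attained unfolding word_ball_def by blast
    moreover have "length ws \<le> nat \<lfloor>R\<rfloor>"
      using g calculation(1) unfolding word_ball_def by (simp add: le_nat_floor)
    ultimately show "g \<in> (\<lambda>ws. foldr (\<otimes>) ws \<one>) ` {ws. set ws \<subseteq> S \<and> length ws \<le> nat \<lfloor>R\<rfloor>}"
      by auto
  qed
  then show ?thesis
    using finite_lists_length_le[OF finite_generators] finite_subset by blast
qed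

lemma one_in_word_ball: "R \<ge> 0 \<Longrightarrow> \<one> \<in> word_ball R"
  unfolding word_ball_def by (simp add: word_length_one)

lemma gamma_var_eq_Max: "gamma_var G S act R f x = Max ((\<lambda>g. \<bar>f x - f (act g x)\<bar>) ` word_ball R)"
  unfolding gamma_var_def word_ball_def by (rule arg_cong[where f=Max]) auto

lemma abs_le_gamma_var: "g \<in> word_ball R \<Longrightarrow> \<bar>f x - f (act g x)\<bar> \<le> gamma_var G S act R f x"
  unfolding gamma_var_eq_Max using finite_word_ball by (intro Max_ge) auto

lemma gamma_var_less:
  "R \<ge> 0 \<Longrightarrow> (\<And>g. g \<in> word_ball R \<Longrightarrow> \<bar>f x - f (act g x)\<bar> < e) \<Longrightarrow> gamma_var G S act R f x < e"
  unfolding gamma_var_eq_Max using finite_word_ball one_in_word_ball by (subst Max_less_iff) auto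

lemma hurder_algebra_translate:
  assumes act: "continuous_group_action G X act" and f: "f \<in> hurder_algebra G S X act"
    and g: "g \<in> carrier G"
  shows "(\<lambda>x. f (act g x)) \<in> hurder_algebra G S X act"
proof -
  from f have f_cont: "continuous_map X euclideanreal f"
    and f_bounded: "\<exists>B. \<forall>x\<in>topspace X. \<bar>f x\<bar> \<le> B"
    and f_var: "\<And>R e. R > 0 \<Longrightarrow> e > 0 \<Longrightarrow>
      \<exists>K. compactin X K \<and> (\<forall>x\<in>topspace X - K. gamma_var G S act R f x < e)"
    unfolding hurder_algebra_def by auto
  have "\<exists>K. compactin X K \<and> (\<forall>x\<in>topspace X - K. gamma_var G S act R (\<lambda>x. f (act g x)) x < e)"
    if R: "R > 0" and e: "e > 0" for R e
  proof -
    define R' where "R' = R + (word_length G S g + word_length G S (inv g))"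
    obtain K where K: "compactin X K" "\<forall>x\<in>topspace X - K. gamma_var G S act R' f x < e"
      using f_var[of R' e] R e unfolding R'_def by auto
    have "gamma_var G S act R (\<lambda>x. f (act g x)) x < e" if x: "x \<in> topspace X - act (inv g) ` K" for x
    proof (rule gamma_var_less)
      fix \<gamma> assume \<gamma>: "\<gamma> \<in> word_ball R"
      then have \<gamma>_carrier: "\<gamma> \<in> carrier G" unfolding word_ball_def by simp
      have "act g x \<notin> K"
        using x continuous_group_action_inv_cancel[OF act g] by force
      then have "gamma_var G S act R' f (act g x) < e"
        using K(2) continuous_group_action_in_topspace[OF act g] x by blast
      moreover have "g \<otimes> \<gamma> \<otimes> inv g \<in> word_ball R'"
        using word_length_conjugate[OF g \<gamma>_carrier] \<gamma> g unfolding word_ball_def R'_def by simp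
      moreover have "act (g \<otimes> \<gamma> \<otimes> inv g) (act g x) = act g (act \<gamma> x)"
        using continuous_group_action_mult[OF act] continuous_group_action_inv_cancel[OF act]
          continuous_group_action_in_topspace[OF act] g \<gamma>_carrier x
        by (simp add: m_assoc)
      ultimately show "\<bar>f (act g x) - f (act g (act \<gamma> x))\<bar> < e"
        using abs_le_gamma_var[of "g \<otimes> \<gamma> \<otimes> inv g" R' f "act g x" act] by simp
    qed (use R in simp)
    moreover have "compactin X (act (inv g) ` K)"
      using image_compactin K(1) continuous_group_action_continuous[OF act] g by blast
    ultimately show ?thesis by blast
  qed
  moreover have "continuous_map X euclideanreal (\<lambda>x. f (act g x))"
    using continuous_map_compose[OF continuous_group_action_continuous[OF act g] f_cont]
    by (simp add: o_def)
  moreover have "\<exists>B. \<forall>x\<in>topspace X. \<bar>f (act g x)\<bar> \<le> B"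
    using f_bounded continuous_group_action_in_topspace[OF act g] by blast
  ultimately show ?thesis
    unfolding hurder_algebra_def by blast
qed

lemma hurder_algebra_if_trivial_on_corona:
  assumes Z: "compactification X Z k" and ext: "extends_action G X act Z k actZ"
    and triv: "trivial_on_corona G X Z k actZ" and \<phi>: "continuous_map Z euclideanreal \<phi>"
  shows "(\<lambda>x. \<phi> (k x)) \<in> hurder_algebra G S X act"
proof -
  have k: "continuous_map X Z k"
    using Z by (rule compactification_imp_continuous_map)
  have actZ: "continuous_group_action G Z actZ"
    and actZ_k: "\<And>g x. g \<in> carrier G \<Longrightarrow> x \<in> topspace X \<Longrightarrow> actZ g (k x) = k (act g x)"
    using ext unfolding extends_action_def by auto
  have "\<exists>K. compactin X K \<and> (\<forall>x\<in>topspace X - K. gamma_var G S act R (\<lambda>x. \<phi> (k x)) x < e)"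
    if R: "R > 0" and e: "e > 0" for R e
  proof -
    define C where "C = (\<Union>\<gamma>\<in>word_ball R. {z \<in> topspace Z. \<bar>\<phi> z - \<phi> (actZ \<gamma> z)\<bar> \<in> {e..}})"
    have "closedin Z {z \<in> topspace Z. \<bar>\<phi> z - \<phi> (actZ \<gamma> z)\<bar> \<in> {e..}}" if "\<gamma> \<in> word_ball R" for \<gamma>
    proof (rule closedin_continuous_map_preimage)
      have "continuous_map Z Z (actZ \<gamma>)"
        using continuous_group_action_continuous[OF actZ] that unfolding word_ball_def by simp
      then show "continuous_map Z euclideanreal (\<lambda>z. \<bar>\<phi> z - \<phi> (actZ \<gamma> z)\<bar>)"
        using \<phi> continuous_map_compose[of Z Z "actZ \<gamma>" euclideanreal \<phi>]
        by (intro continuous_intros) (auto simp: o_def)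
    qed simp
    then have "closedin Z C"
      unfolding C_def using finite_word_ball by (intro closedin_Union) auto
    moreover have "C \<subseteq> k ` topspace X"
      unfolding C_def using triv e
      by (force simp: trivial_on_corona_def word_ball_def)
    ultimately have "compactin X {x \<in> topspace X. k x \<in> C}"
      using compactification_compactin_preimage[OF Z] by blast
    moreover have "gamma_var G S act R (\<lambda>x. \<phi> (k x)) x < e"
      if x: "x \<in> topspace X - {x \<in> topspace X. k x \<in> C}" for x
    proof (rule gamma_var_less)
      fix \<gamma> assume \<gamma>: "\<gamma> \<in> word_ball R"
      have "k x \<in> topspace Z" "k x \<notin> C"
        using x k by (auto simp: continuous_map_def)
      then have "\<bar>\<phi> (k x) - \<phi> (actZ \<gamma> (k x))\<bar> < e"
        using \<gamma> unfolding C_def by force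
      then show "\<bar>\<phi> (k x) - \<phi> (k (act \<gamma> x))\<bar> < e"
        using actZ_k \<gamma> x unfolding word_ball_def by simp
    qed (use R in simp)
    ultimately show ?thesis by blast
  qed
  moreover have "continuous_map X euclideanreal (\<lambda>x. \<phi> (k x))"
    using continuous_map_compose[OF k \<phi>] by (simp add: o_def)
  moreover obtain B where "\<forall>z\<in>topspace Z. \<bar>\<phi> z\<bar> \<le> B"
    using compact_space_imp_bounded_real_function Z \<phi> unfolding compactification_def by blast
  then have "\<exists>B. \<forall>x\<in>topspace X. \<bar>\<phi> (k x)\<bar> \<le> B"
    using k by (auto simp: continuous_map_def)
  ultimately show ?thesis
    unfolding hurder_algebra_def by blast
qed

lemma hurder_algebra_displacement_small:
  assumes "f \<in> hurder_algebra G S X act" "g \<in> carrier G" "e > 0"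
  obtains K where "compactin X K" "\<forall>x\<in>topspace X - K. \<bar>f x - f (act g x)\<bar> < e"
proof -
  define R where "R = real (word_length G S g) + 1"
  have "R > 0" "g \<in> word_ball R"
    using assms(2) unfolding R_def word_ball_def by auto
  moreover obtain K where "compactin X K" "\<forall>x\<in>topspace X - K. gamma_var G S act R f x < e"
    using assms(1,3) \<open>R > 0\<close> unfolding hurder_algebra_def by blast
  ultimately show ?thesis
    using that abs_le_gamma_var[of g R f _ act] by (meson le_less_trans)
qed

lemma trivial_on_corona_if_hurder:
  assumes Y: "compactification X Y j" and ext: "extends_action G X act Y j actY"
    and hurder: "\<And>\<phi>. continuous_map Y euclideanreal \<phi> \<Longrightarrow> (\<lambda>x. \<phi> (j x)) \<in> hurder_algebra G S X act"
  shows "trivial_on_corona G X Y j actY"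
  unfolding trivial_on_corona_def
proof (intro ballI)
  fix g y assume g: "g \<in> carrier G" and y: "y \<in> topspace Y - j ` topspace X"
  have actY_g: "continuous_map Y Y (actY g)"
    using ext g unfolding extends_action_def continuous_group_action_def by blast
  show "actY g y = y"
  proof (rule ccontr)
    assume "actY g y \<noteq> y"
    moreover have "actY g y \<in> topspace Y"
      using actY_g y by (auto simp: continuous_map_def)
    ultimately obtain \<phi> where \<phi>: "continuous_map Y euclideanreal \<phi>" "\<phi> y = 0" "\<phi> (actY g y) = 1"
      using compact_Hausdorff_separating_function[of Y y "actY g y"] Y y
      unfolding compactification_def by auto
    obtain K where K: "compactin X K" "\<forall>x\<in>topspace X - K. \<bar>\<phi> (j x) - \<phi> (j (act g x))\<bar> < 1/2"
      using hurder_algebra_displacement_small[OF hurder[OF \<phi>(1)] g, of "1/2"] by auto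
    define U where "U = {z \<in> topspace Y. \<bar>\<phi> z - \<phi> (actY g z)\<bar> \<in> {1/2<..}}"
    have "continuous_map Y euclideanreal (\<lambda>z. \<bar>\<phi> z - \<phi> (actY g z)\<bar>)"
      using \<phi>(1) continuous_map_compose[OF actY_g \<phi>(1)]
      by (intro continuous_intros) (auto simp: o_def)
    then have "openin Y U"
      unfolding U_def by (rule openin_continuous_map_preimage) auto
    moreover have "closedin Y (j ` K)"
      using Y K(1) compactification_imp_continuous_map image_compactin compactin_imp_closedin
      unfolding compactification_def by metis
    ultimately have "openin Y (U - j ` K)"
      by (rule openin_diff)
    moreover have "y \<in> U - j ` K"
      using y \<phi> compactin_subset_topspace[OF K(1)] unfolding U_def by auto
    ultimately obtain x where x: "x \<in> topspace X" "j x \<in> U" "x \<notin> K"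
      using Y unfolding compactification_def dense_intersects_open by blast
    then have "\<bar>\<phi> (j x) - \<phi> (j (act g x))\<bar> > 1/2"
      using ext g unfolding U_def extends_action_def by simp
    then show False
      using K(2) x by force
  qed
qed

end

lemma compactification_determined_by_extension:
  assumes Y: "compactification_determined_by A X Y j"
    and Z: "compact_space Z" "Hausdorff_space Z" and k: "continuous_map X Z k"
    and pullback: "\<And>\<phi>. continuous_map Z euclideanreal \<phi> \<Longrightarrow> (\<lambda>x. \<phi> (k x)) \<in> A"
  shows "\<exists>h. continuous_map Y Z h \<and> (\<forall>x\<in>topspace X. h (j x) = k x)"
proof (rule continuous_extension_from_real_functions[OF _ _ _ Z k])
  show "compact_space Y" "Y closure_of (j ` topspace X) = topspace Y"
    using Y unfolding compactification_determined_by_def compactification_def by auto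
  show "continuous_map X Y j"
    using Y compactification_imp_continuous_map unfolding compactification_determined_by_def by blast
  fix \<phi> assume "continuous_map Z euclideanreal \<phi>"
  then show "\<exists>\<psi>. continuous_map Y euclideanreal \<psi> \<and> (\<forall>x\<in>topspace X. \<psi> (j x) = \<phi> (k x))"
    using pullback Y unfolding compactification_determined_by_def by metis
qed

lemma extends_action_if_translation_invariant:
  assumes G: "monoid G" and Y: "compactification_determined_by A X Y j"
    and act: "continuous_group_action G X act"
    and invariant: "\<And>g f. g \<in> carrier G \<Longrightarrow> f \<in> A \<Longrightarrow> (\<lambda>x. f (act g x)) \<in> A"
  shows "\<exists>actY. extends_action G X act Y j actY"
proof -
  have Y_comp: "compact_space Y" "Hausdorff_space Y"
    and dense: "Y closure_of (j ` topspace X) = topspace Y"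
    and j: "continuous_map X Y j"
    using Y compactification_imp_continuous_map
    unfolding compactification_determined_by_def compactification_def by blast+
  have "\<exists>h. continuous_map Y Y h \<and> (\<forall>x\<in>topspace X. h (j x) = j (act g x))" if g: "g \<in> carrier G" for g
  proof (rule compactification_determined_by_extension[OF Y Y_comp])
    show "continuous_map X Y (\<lambda>x. j (act g x))"
      using continuous_map_compose[OF continuous_group_action_continuous[OF act g] j]
      by (simp add: o_def)
    fix \<phi> assume "continuous_map Y euclideanreal \<phi>"
    then show "(\<lambda>x. \<phi> (j (act g x))) \<in> A"
      using invariant[OF g, of "\<lambda>x. \<phi> (j x)"] Y unfolding compactification_determined_by_def by blast
  qed
  then obtain actY where actY: "\<And>g. g \<in> carrier G \<Longrightarrow>
      continuous_map Y Y (actY g) \<and> (\<forall>x\<in>topspace X. actY g (j x) = j (act g x))"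
    by metis
  have agree: "f y = f' y"
    if "y \<in> topspace Y" "continuous_map Y Y f" "continuous_map Y Y f'"
      "\<And>x. x \<in> topspace X \<Longrightarrow> f (j x) = f' (j x)" for y f f'
    using forall_in_closure_of_eq[of y Y "j ` topspace X" Y f f'] that dense Y_comp by auto
  have "continuous_group_action G Y actY"
    unfolding continuous_group_action_def
  proof (intro conjI ballI)
    show "continuous_map Y Y (actY g)" if "g \<in> carrier G" for g
      using actY that by blast
    show "actY \<one>\<^bsub>G\<^esub> y = y" if "y \<in> topspace Y" for y
      using agree[OF that, of "actY \<one>\<^bsub>G\<^esub>" id] actY[of "\<one>\<^bsub>G\<^esub>"] G
        continuous_group_action_one[OF act] by (simp add: monoid.one_closed)
    show "actY (g \<otimes>\<^bsub>G\<^esub> h) y = actY g (actY h y)"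
      if "g \<in> carrier G" "h \<in> carrier G" "y \<in> topspace Y" for g h y
      using agree[OF that(3), of "actY (g \<otimes>\<^bsub>G\<^esub> h)" "actY g \<circ> actY h"] actY that G
        continuous_group_action_mult[OF act] continuous_group_action_in_topspace[OF act]
        continuous_map_compose[of Y Y "actY h" Y "actY g"]
      by (simp add: monoid.m_closed)
  qed
  then show ?thesis
    using actY unfolding extends_action_def by blast
qed

theorem proposition4:
  fixes G :: "('g, 'm) monoid_scheme" and S :: "'g set"
    and X :: "'a topology" and act :: "'g \<Rightarrow> 'a \<Rightarrow> 'a"
    and Y :: "'b topology" and j :: "'a \<Rightarrow> 'b"
  assumes "group G"
    and "finite S" and "S \<subseteq> carrier G" and "\<forall>s\<in>S. inv\<^bsub>G\<^esub> s \<in> S"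
    and "generate G S = carrier G"
    and "Hausdorff_space X" and "locally_compact_space X"
    and "continuous_group_action G X act"
    and "free_action G X act" and "proper_action G X act"
    and "hurder_compactification G S X act Y j"
  shows "(\<exists>actY. extends_action G X act Y j actY \<and> trivial_on_corona G X Y j actY)
    \<and> (\<forall>(Z :: 'c topology) k actZ.
          compactification X Z k \<and> extends_action G X act Z k actZ \<and>
          trivial_on_corona G X Z k actZ \<longrightarrow>
          (\<exists>h. continuous_map Y Z h \<and> (\<forall>x\<in>topspace X. h (j x) = k x)))"
proof -
  interpret word_metric G S
    using assms(1-5) by (simp add: word_metric_def word_metric_axioms_def)
  have Y: "compactification_determined_by (hurder_algebra G S X act) X Y j"
    using assms(11) unfolding hurder_compactification_def .
  then have pullback: "\<And>\<phi>. continuous_map Y euclideanreal \<phi> \<Longrightarrow> (\<lambda>x. \<phi> (j x)) \<in> hurder_algebra G S X act"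
    unfolding compactification_determined_by_def by blast
  obtain actY where actY: "extends_action G X act Y j actY"
    using extends_action_if_translation_invariant[OF is_monoid Y assms(8)]
      hurder_algebra_translate[OF assms(8)] by blast
  moreover have "trivial_on_corona G X Y j actY"
    using trivial_on_corona_if_hurder Y actY pullback unfolding compactification_determined_by_def by blast
  moreover have "\<exists>h. continuous_map Y Z h \<and> (\<forall>x\<in>topspace X. h (j x) = k x)"
    if "compactification X Z k" "extends_action G X act Z k actZ" "trivial_on_corona G X Z k actZ"
    for Z :: "'c topology" and k actZ
    using compactification_determined_by_extension[OF Y] hurder_algebra_if_trivial_on_corona[OF that]
      that(1) compactification_imp_continuous_map unfolding compactification_def by blast
  ultimately show ?thesis by blast
qed

end
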